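(* Let $\mu_n>0$ satisfy $\mu_n\to 0$ and $n^{1/2}\mu_n\to\mathfrak m$ with $0\le\mathfrak m\le\infty$. Let $\theta_n\in\mathbb R$ be a sequence of true parameters. (i) Suppose $0\le\mathfrak m<\infty$ and $n^{1/2}\theta_n\to\nu\in\mathbb R\cup\{-\infty,\infty\}$. Then $$\lim_{n\to\infty}P_{n,\theta_n}(\hat\theta_A=0)=\Phi(-\nu+\mathfrak m)-\Phi(-\nu-\mathfrak m).$$ (ii) Suppose $\mathfrak m=\infty$ and $\theta_n/\mu_n\to\zeta\in\mathbb R\cup\{-\infty,\infty\}$. Then: 1. if $|\zeta|<1$, then $\lim_{n}P_{n,\theta_n}(\hat\theta_A=0)=1$; 2. if $|\zeta|=1$ and $n^{1/2}(\mu_n-\zeta\theta_n)\to r\in\mathbb R\cup\{-\infty,\infty\}$, then $\lim_nP_{n,\theta_n}(\hat\theta_A=0)=\Phi(r)$; 3. if $|\zeta|>1$, then $\lim_nP_{n,\theta_n}(\hat\theta_A=0)=0$.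
   Context: Gaussian location model: for each sample size $n$, $y_1,\dots,y_n$ are i.i.d. $N(\theta,1)$ with $\theta\in\mathbb R$ unknown; $\bar y$ is their mean. $P_{n,\theta}$ denotes the probability governing a sample of size $n$ when $\theta$ is the true parameter. Given a nonrandom tuning parameter $\mu_n>0$, the adaptive LASSO estimator is $$\hat\theta_A=\bar y(1-\mu_n^2/\bar y^2)_+=\begin{cases}0,&|\bar y|\le\mu_n,\\ \bar y-\mu_n^2/\bar y,&|\bar y|>\mu_n.\end{cases}$$ $\Phi$ denotes the standard normal cdf, with $\Phi(\infty)=1$, $\Phi(-\infty)=0$. *)

theory Defs
  imports "HOL-Probability.Probability"
begin

definition Phi :: "real \<Rightarrow> real" where
  "Phi x = measure (density lborel std_normal_density) {..x}"

definition Phi_ext :: "ereal \<Rightarrow> real" where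
  "Phi_ext z = (case z of ereal x \<Rightarrow> Phi x | PInfty \<Rightarrow> 1 | MInfty \<Rightarrow> 0)"

definition sample_dist :: "nat \<Rightarrow> real \<Rightarrow> (nat \<Rightarrow> real) measure" where
  "sample_dist n \<theta> = PiM {..<n} (\<lambda>_. density lborel (normal_density \<theta> 1))"

definition sample_mean :: "nat \<Rightarrow> (nat \<Rightarrow> real) \<Rightarrow> real" where
  "sample_mean n y = (\<Sum>i<n. y i) / real n"

definition adaptive_lasso :: "real \<Rightarrow> real \<Rightarrow> real" where
  "adaptive_lasso \<mu> yb = (if \<bar>yb\<bar> \<le> \<mu> then 0 else yb - \<mu>\<^sup>2 / yb)"

definition prob_zero :: "nat \<Rightarrow> real \<Rightarrow> real \<Rightarrow> real" where
  "prob_zero n \<mu> \<theta> = measure (sample_dist n \<theta>)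
     {y \<in> space (sample_dist n \<theta>). adaptive_lasso \<mu> (sample_mean n y) = 0}"

end

theory Submission
  imports Defs
begin

(* Under P_{n,theta} the standardized mean Z = sqrt n (ybar - theta) is
   exactly standard normal, and the adaptive LASSO estimate vanishes iff |ybar| <= mu.
   Hence, for every n > 0,
       P_{n,theta}(hat theta_A = 0) = Phi (sqrt n (mu - theta)) - Phi (sqrt n (-mu - theta)).
   Since Phi_ext is continuous on the extended reals, the probability converges to
   Phi_ext A - Phi_ext B whenever the two standardized endpoints converge to A and B
   in the extended reals.  Every case of the proposition is an evaluation of this
   limit: in case (i) the endpoints tend to m - nu and -m - nu; in case (ii) they are
   s_n (1 - q_n) and s_n (-1 - q_n) with s_n = sqrt n mu_n -> infinity and
   q_n = theta_n / mu_n -> zeta, so each is +-infinity unless zeta = +-1, where the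
   hypothesis on sqrt n (mu_n - zeta theta_n) supplies the missing limit. *)

abbreviation std_normal :: "real measure" where
  "std_normal \<equiv> density lborel std_normal_density"

lemma std_normal_real_distribution: "real_distribution std_normal"
proof -
  interpret prob_space std_normal using prob_space_normal_density by simp
  show ?thesis by unfold_locales simp
qed

lemma Phi_eq_cdf: "Phi = cdf std_normal"
  by (simp add: Phi_def[abs_def] cdf_def)

text \<open>The standard normal law has no atoms; this gives continuity of Phi and lets
  closed and half-open intervals be interchanged.\<close>
lemma std_normal_no_atoms: "measure std_normal {x} = 0"
  by (simp add: measure_def emeasure_density)

lemma isCont_Phi: "isCont Phi x"
  using real_distribution.finite_borel_measure_M[OF std_normal_real_distribution]
  by (simp add: Phi_eq_cdf finite_borel_measure.isCont_cdf std_normal_no_atoms)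

lemma Phi_at_top: "(Phi \<longlongrightarrow> 1) at_top"
  unfolding Phi_eq_cdf by (rule real_distribution.cdf_lim_at_top_prob[OF std_normal_real_distribution])

lemma Phi_at_bot: "(Phi \<longlongrightarrow> 0) at_bot"
  unfolding Phi_eq_cdf
  by (rule finite_borel_measure.cdf_lim_at_bot
      [OF real_distribution.finite_borel_measure_M[OF std_normal_real_distribution]])

lemma Phi_ext_tendsto:
  assumes "(\<lambda>n. ereal (x n)) \<longlonglongrightarrow> z"
  shows "(\<lambda>n. Phi (x n)) \<longlonglongrightarrow> Phi_ext z"
proof (cases z)
  case (real r)
  with assms have "x \<longlonglongrightarrow> r" by simp
  with real show ?thesis
    using isCont_tendsto_compose[OF isCont_Phi] by (simp add: Phi_ext_def)
next
  case PInf
  with assms have "filterlim x at_top sequentially" by (simp add: tendsto_PInfty_eq_at_top)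
  with PInf show ?thesis
    using filterlim_compose[OF Phi_at_top] by (simp add: Phi_ext_def)
next
  case MInf
  with assms have "filterlim x at_bot sequentially"
    using ereal_tendsto_simps2(3)[of x] by (simp add: o_def)
  with MInf show ?thesis
    using filterlim_compose[OF Phi_at_bot] by (simp add: Phi_ext_def)
qed

lemma Phi_ext_infinite:
  fixes x :: ereal
  shows "x > 0 \<Longrightarrow> Phi_ext (\<infinity> * x) = 1" and "x < 0 \<Longrightarrow> Phi_ext (\<infinity> * x) = 0"
  by (cases x; simp add: Phi_ext_def)+

lemma std_normal_interval:
  assumes "a \<le> b"
  shows "measure std_normal {a..b} = Phi b - Phi a"
proof -
  interpret real_distribution std_normal by (rule std_normal_real_distribution)
  have split: "{a..b} = {a} \<union> {a<..b}" using assms by auto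
  have "measure std_normal {a..b} = measure std_normal {a} + measure std_normal {a<..b}"
    unfolding split by (rule finite_measure_Union) auto
  also have "\<dots> = Phi b - Phi a"
  proof (cases "a = b")
    case False
    with assms show ?thesis by (simp add: cdf_diff_eq Phi_eq_cdf std_normal_no_atoms)
  qed (simp add: std_normal_no_atoms)
  finally show ?thesis .
qed

text \<open>Symmetry of the standard normal law, Phi (-x) = 1 - Phi x; it is needed for
  the boundary case zeta = -1, where the relevant endpoint is the lower one.\<close>
lemma std_normal_symmetric: "distr std_normal lborel uminus = std_normal"
proof -
  interpret real_distribution std_normal by (rule std_normal_real_distribution)
  have "distributed std_normal lborel (\<lambda>x. x) std_normal_density"
    unfolding distributed_def by (simp add: distr_id2)
  from normal_density_affine[OF this, of "-1" 0]
  have "distributed std_normal lborel uminus std_normal_density" by simp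
  then show ?thesis by (rule distributed_distr_eq_density)
qed

lemma Phi_minus: "Phi (- x) = 1 - Phi x"
proof -
  interpret real_distribution std_normal by (rule std_normal_real_distribution)
  have "Phi (- x) = measure (distr std_normal lborel uminus) {..- x}"
    by (simp add: std_normal_symmetric Phi_def)
  also have "\<dots> = measure std_normal (UNIV - {..<x})"
    by (subst measure_distr) (auto intro!: arg_cong[where f = "measure std_normal"])
  also have "\<dots> = 1 - measure std_normal {..<x}"
    using prob_compl[of "{..<x}"] by simp
  also have "measure std_normal {..<x} = measure std_normal {..<x} + measure std_normal {x}"
    by (simp add: std_normal_no_atoms)
  also have "\<dots> = measure std_normal ({..<x} \<union> {x})"
    by (rule finite_measure_Union[symmetric]) auto
  also have "{..<x} \<union> {x} = {..x}" by auto
  finally show ?thesis by (simp add: Phi_def)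
qed

lemma Phi_ext_uminus: "Phi_ext (- r) = 1 - Phi_ext r"
  by (cases r) (auto simp: Phi_ext_def Phi_minus)

lemma PiM_coordinates_indep:
  assumes I: "I \<noteq> {}" and M: "\<And>i. i \<in> I \<Longrightarrow> prob_space (M i)"
  shows "prob_space.indep_vars (PiM I M) M (\<lambda>i x. x i) I"
proof -
  interpret prob_space "PiM I M" using M by (rule prob_space_PiM)
  have "distr (PiM I M) (PiM I M) (\<lambda>x. restrict (\<lambda>i. x i) I) = distr (PiM I M) (PiM I M) (\<lambda>x. x)"
    by (rule distr_cong) (auto simp: space_PiM)
  also have "\<dots> = PiM I (\<lambda>i. distr (PiM I M) (M i) (\<lambda>x. x i))"
    using M by (auto intro!: PiM_cong simp: distr_PiM_component)
  finally show ?thesis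
    using I by (subst indep_vars_iff_distr_eq_PiM') auto
qed

lemma indep_vars_cong_sets:
  assumes "prob_space M" "\<And>i. i \<in> I \<Longrightarrow> sets (M' i) = sets (N' i)"
  shows "prob_space.indep_vars M M' X I \<longleftrightarrow> prob_space.indep_vars M N' X I"
  unfolding prob_space.indep_vars_def2[OF assms(1)]
  by (intro conj_cong ball_cong refl prob_space.indep_sets_cong[OF assms(1)])
    (auto simp: assms(2) measurable_cong_sets[OF refl assms(2)])

lemma sample_dist_prob_space: "prob_space (sample_dist n \<theta>)"
  unfolding sample_dist_def by (intro prob_space_PiM prob_space_normal_density) auto

lemma sample_coordinate_normal:
  assumes "i < n"
  shows "distributed (sample_dist n \<theta>) lborel (\<lambda>y. y i) (normal_density \<theta> 1)"
proof -
  have "distr (sample_dist n \<theta>) lborel (\<lambda>y. y i)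
      = distr (sample_dist n \<theta>) (density lborel (normal_density \<theta> 1)) (\<lambda>y. y i)"
    by (rule distr_cong) auto
  also have "\<dots> = density lborel (normal_density \<theta> 1)"
    unfolding sample_dist_def using assms
    by (intro distr_PiM_component prob_space_normal_density) auto
  finally show ?thesis
    unfolding distributed_def using assms by (auto simp: sample_dist_def)
qed

lemma sample_coordinates_indep:
  assumes "n > 0"
  shows "prob_space.indep_vars (sample_dist n \<theta>) (\<lambda>_. borel) (\<lambda>i y. y i) {..<n}"
  using PiM_coordinates_indep[of "{..<n}" "\<lambda>_. density lborel (normal_density \<theta> 1)"] assms
  by (subst indep_vars_cong_sets[OF sample_dist_prob_space, of _ _ "\<lambda>_. density lborel (normal_density \<theta> 1)"])
    (auto simp: sample_dist_def prob_space_normal_density)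

lemma standardized_mean_std_normal:
  assumes n: "n > 0"
  shows "distributed (sample_dist n \<theta>) lborel (\<lambda>y. (sample_mean n y - \<theta>) * sqrt (real n))
           std_normal_density"
proof -
  interpret prob_space "sample_dist n \<theta>" by (rule sample_dist_prob_space)
  have "distributed (sample_dist n \<theta>) lborel (\<lambda>y. \<Sum>i<n. y i)
      (normal_density (\<Sum>i<n. \<theta>) (sqrt (\<Sum>i<n. 1\<^sup>2)))"
    using n by (intro sum_indep_normal sample_coordinates_indep sample_coordinate_normal) auto
  then have "distributed (sample_dist n \<theta>) lborel
      (\<lambda>y. ((\<Sum>i<n. y i) - real n * \<theta>) / sqrt (real n)) std_normal_density"
    using normal_standard_normal_convert[of "sqrt (real n)"] n by simp
  moreover have "((\<Sum>i<n. y i) - real n * \<theta>) / sqrt (real n) = (sample_mean n y - \<theta>) * sqrt (real n)"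
    for y
  proof -
    have "sqrt (real n) * sqrt (real n) = real n" by simp
    with n show ?thesis by (simp add: sample_mean_def field_simps)
  qed
  ultimately show ?thesis by simp
qed

text \<open>The estimate is zero exactly when the mean lies in [-mu, mu]: outside that
  interval |ybar - mu^2/ybar| = (ybar^2 - mu^2)/|ybar| > 0.\<close>
lemma adaptive_lasso_eq_0_iff:
  assumes "\<mu> > 0"
  shows "adaptive_lasso \<mu> x = 0 \<longleftrightarrow> \<bar>x\<bar> \<le> \<mu>"
proof -
  have "x - \<mu>\<^sup>2 / x \<noteq> 0" if "\<bar>x\<bar> > \<mu>"
  proof
    assume "x - \<mu>\<^sup>2 / x = 0"
    with that assms have "\<bar>x\<bar>\<^sup>2 = \<mu>\<^sup>2" by (auto simp: field_simps power2_eq_square)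
    with that assms show False using power_strict_mono[of \<mu> "\<bar>x\<bar>" 2] by simp
  qed
  then show ?thesis unfolding adaptive_lasso_def by force
qed

lemma prob_zero_eq_Phi:
  assumes n: "n > 0" and \<mu>: "\<mu> > 0"
  shows "prob_zero n \<mu> \<theta> = Phi (sqrt (real n) * (\<mu> - \<theta>)) - Phi (sqrt (real n) * (- \<mu> - \<theta>))"
proof -
  let ?M = "sample_dist n \<theta>"
  let ?Z = "\<lambda>y. (sample_mean n y - \<theta>) * sqrt (real n)"
  let ?I = "{sqrt (real n) * (- \<mu> - \<theta>) .. sqrt (real n) * (\<mu> - \<theta>)}"
  interpret prob_space ?M by (rule sample_dist_prob_space)
  note Z = standardized_mean_std_normal[OF n, of \<theta>]
  have sn: "sqrt (real n) > 0" using n by simp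
  have "\<bar>sample_mean n y\<bar> \<le> \<mu> \<longleftrightarrow> ?Z y \<in> ?I" for y
    using sn by (auto simp: abs_le_iff mult.commute[of "sqrt (real n)"])
  then have "{y \<in> space ?M. adaptive_lasso \<mu> (sample_mean n y) = 0} = ?Z -` ?I \<inter> space ?M"
    using adaptive_lasso_eq_0_iff[OF \<mu>] by auto
  then have "prob_zero n \<mu> \<theta> = measure (distr ?M lborel ?Z) ?I"
    unfolding prob_zero_def using distributed_measurable[OF Z] by (subst measure_distr) auto
  also have "\<dots> = measure std_normal ?I"
    by (simp add: distributed_distr_eq_density[OF Z])
  also have "\<dots> = Phi (sqrt (real n) * (\<mu> - \<theta>)) - Phi (sqrt (real n) * (- \<mu> - \<theta>))"
    using sn \<mu> by (intro std_normal_interval) (simp add: mult_left_mono)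
  finally show ?thesis .
qed

lemma prob_zero_tendsto:
  fixes \<mu> \<theta> :: "nat \<Rightarrow> real"
  assumes pos: "\<And>n. \<mu> n > 0"
    and A: "(\<lambda>n. ereal (sqrt (real n) * (\<mu> n - \<theta> n))) \<longlonglongrightarrow> A"
    and B: "(\<lambda>n. ereal (sqrt (real n) * (- \<mu> n - \<theta> n))) \<longlonglongrightarrow> B"
  shows "(\<lambda>n. prob_zero n (\<mu> n) (\<theta> n)) \<longlonglongrightarrow> Phi_ext A - Phi_ext B"
proof (rule Lim_transform_eventually)
  show "(\<lambda>n. Phi (sqrt (real n) * (\<mu> n - \<theta> n)) - Phi (sqrt (real n) * (- \<mu> n - \<theta> n)))
      \<longlonglongrightarrow> Phi_ext A - Phi_ext B"
    by (intro tendsto_diff Phi_ext_tendsto A B)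
  show "\<forall>\<^sub>F n in sequentially. Phi (sqrt (real n) * (\<mu> n - \<theta> n)) - Phi (sqrt (real n) * (- \<mu> n - \<theta> n))
      = prob_zero n (\<mu> n) (\<theta> n)"
    using eventually_gt_at_top[of "0::nat"] by eventually_elim (simp add: prob_zero_eq_Phi pos)
qed

lemma prob_zero_finite_tuning:
  fixes \<mu> \<theta> :: "nat \<Rightarrow> real" and m :: real
  assumes pos: "\<And>n. \<mu> n > 0"
    and m: "(\<lambda>n. ereal (sqrt (real n) * \<mu> n)) \<longlonglongrightarrow> ereal m"
    and \<nu>: "(\<lambda>n. ereal (sqrt (real n) * \<theta> n)) \<longlonglongrightarrow> \<nu>"
  shows "(\<lambda>n. prob_zero n (\<mu> n) (\<theta> n)) \<longlonglongrightarrow> Phi_ext (- \<nu> + ereal m) - Phi_ext (- \<nu> - ereal m)"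
proof -
  have "(\<lambda>n. ereal (sqrt (real n) * \<mu> n) - ereal (sqrt (real n) * \<theta> n)) \<longlonglongrightarrow> ereal m - \<nu>"
    by (intro tendsto_diff_ereal_general m \<nu>) auto
  then have A: "(\<lambda>n. ereal (sqrt (real n) * (\<mu> n - \<theta> n))) \<longlonglongrightarrow> - \<nu> + ereal m"
    by (cases \<nu>) (simp_all add: right_diff_distrib)
  have "(\<lambda>n. - ereal (sqrt (real n) * \<mu> n) - ereal (sqrt (real n) * \<theta> n)) \<longlonglongrightarrow> - ereal m - \<nu>"
    by (intro tendsto_diff_ereal_general tendsto_uminus_ereal m \<nu>) auto
  moreover have "- ereal m - \<nu> = - \<nu> - ereal m" by (cases \<nu>) simp_all
  ultimately have B: "(\<lambda>n. ereal (sqrt (real n) * (- \<mu> n - \<theta> n))) \<longlonglongrightarrow> - \<nu> - ereal m"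
    by (simp add: right_diff_distrib)
  show ?thesis by (rule prob_zero_tendsto[OF pos A B])
qed

lemma scaled_difference_tendsto:
  fixes s q :: "nat \<Rightarrow> real" and c :: real
  assumes s: "(\<lambda>n. ereal (s n)) \<longlonglongrightarrow> \<infinity>" and q: "(\<lambda>n. ereal (q n)) \<longlonglongrightarrow> \<zeta>" and "\<zeta> \<noteq> c"
  shows "(\<lambda>n. ereal (s n * (c - q n))) \<longlonglongrightarrow> \<infinity> * (ereal c - \<zeta>)"
proof -
  have "(\<lambda>n. ereal c - ereal (q n)) \<longlonglongrightarrow> ereal c - \<zeta>"
    by (intro tendsto_diff_ereal_general q tendsto_const) auto
  moreover have "ereal c - \<zeta> \<noteq> 0" using assms(3) by (cases \<zeta>) auto
  ultimately have "(\<lambda>n. ereal (s n) * (ereal c - ereal (q n))) \<longlonglongrightarrow> \<infinity> * (ereal c - \<zeta>)"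
    by (intro tendsto_mult_ereal s) auto
  then show ?thesis by simp
qed

text \<open>Case (ii): with sqrt n mu_n -> infinity and theta_n/mu_n -> zeta, the endpoints are
  sqrt n mu_n (\<plusminus>1 - theta_n/mu_n), which diverge unless zeta = \<plusminus>1.\<close>
lemma endpoints_large_tuning:
  fixes \<mu> \<theta> :: "nat \<Rightarrow> real"
  assumes pos: "\<And>n. \<mu> n > 0"
    and s: "(\<lambda>n. ereal (sqrt (real n) * \<mu> n)) \<longlonglongrightarrow> \<infinity>"
    and q: "(\<lambda>n. ereal (\<theta> n / \<mu> n)) \<longlonglongrightarrow> \<zeta>"
  shows "\<zeta> \<noteq> 1 \<Longrightarrow> (\<lambda>n. ereal (sqrt (real n) * (\<mu> n - \<theta> n))) \<longlonglongrightarrow> \<infinity> * (1 - \<zeta>)"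
    and "\<zeta> \<noteq> -1 \<Longrightarrow> (\<lambda>n. ereal (sqrt (real n) * (- \<mu> n - \<theta> n))) \<longlonglongrightarrow> \<infinity> * (-1 - \<zeta>)"
proof -
  have "sqrt (real n) * (c * \<mu> n - \<theta> n) = sqrt (real n) * \<mu> n * (c - \<theta> n / \<mu> n)" for c n
    using pos[of n] by (simp add: field_simps)
  note endpoint = scaled_difference_tendsto[OF s q, unfolded this[symmetric]]
  show "\<zeta> \<noteq> 1 \<Longrightarrow> (\<lambda>n. ereal (sqrt (real n) * (\<mu> n - \<theta> n))) \<longlonglongrightarrow> \<infinity> * (1 - \<zeta>)"
    using endpoint[of 1] by (simp only: one_ereal_def[symmetric] mult_1) blast
  show "\<zeta> \<noteq> -1 \<Longrightarrow> (\<lambda>n. ereal (sqrt (real n) * (- \<mu> n - \<theta> n))) \<longlonglongrightarrow> \<infinity> * (-1 - \<zeta>)"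
    using endpoint[of "-1"]
    by (simp only: uminus_ereal.simps(1)[symmetric] one_ereal_def[symmetric] mult_minus1) blast
qed

lemma prob_zero_large_tuning_inside:
  fixes \<mu> \<theta> :: "nat \<Rightarrow> real"
  assumes pos: "\<And>n. \<mu> n > 0"
    and s: "(\<lambda>n. ereal (sqrt (real n) * \<mu> n)) \<longlonglongrightarrow> \<infinity>"
    and q: "(\<lambda>n. ereal (\<theta> n / \<mu> n)) \<longlonglongrightarrow> \<zeta>"
    and \<zeta>: "\<bar>\<zeta>\<bar> < 1"
  shows "(\<lambda>n. prob_zero n (\<mu> n) (\<theta> n)) \<longlonglongrightarrow> 1"
proof -
  from \<zeta> have "\<zeta> \<noteq> 1" "\<zeta> \<noteq> -1" "1 - \<zeta> > 0" "-1 - \<zeta> < 0"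
    by (cases \<zeta>; auto simp: one_ereal_def)+
  note endpoints = endpoints_large_tuning(1)[OF pos s q this(1)] endpoints_large_tuning(2)[OF pos s q this(2)]
  from prob_zero_tendsto[OF pos endpoints] show ?thesis
    by (simp only: Phi_ext_infinite \<open>1 - \<zeta> > 0\<close> \<open>-1 - \<zeta> < 0\<close>) simp
qed

lemma prob_zero_large_tuning_outside:
  fixes \<mu> \<theta> :: "nat \<Rightarrow> real"
  assumes pos: "\<And>n. \<mu> n > 0"
    and s: "(\<lambda>n. ereal (sqrt (real n) * \<mu> n)) \<longlonglongrightarrow> \<infinity>"
    and q: "(\<lambda>n. ereal (\<theta> n / \<mu> n)) \<longlonglongrightarrow> \<zeta>"
    and \<zeta>: "\<bar>\<zeta>\<bar> > 1"
  shows "(\<lambda>n. prob_zero n (\<mu> n) (\<theta> n)) \<longlonglongrightarrow> 0"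
proof -
  from \<zeta> have "\<zeta> \<noteq> 1" "\<zeta> \<noteq> -1" by auto
  note lim = prob_zero_tendsto[OF pos endpoints_large_tuning(1)[OF pos s q this(1)]
      endpoints_large_tuning(2)[OF pos s q this(2)]]
  from \<zeta> consider "1 - \<zeta> < 0" "-1 - \<zeta> < 0" | "1 - \<zeta> > 0" "-1 - \<zeta> > 0"
    by (cases \<zeta>) (auto simp: one_ereal_def abs_if split: if_splits)
  then show ?thesis by cases (use lim in \<open>simp_all only: Phi_ext_infinite diff_self\<close>)
qed

lemma prob_zero_large_tuning_boundary:
  fixes \<mu> \<theta> :: "nat \<Rightarrow> real"
  assumes pos: "\<And>n. \<mu> n > 0"
    and s: "(\<lambda>n. ereal (sqrt (real n) * \<mu> n)) \<longlonglongrightarrow> \<infinity>"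
    and q: "(\<lambda>n. ereal (\<theta> n / \<mu> n)) \<longlonglongrightarrow> \<zeta>"
    and \<zeta>: "\<bar>\<zeta>\<bar> = 1"
    and r: "(\<lambda>n. ereal (sqrt (real n) * (\<mu> n - real_of_ereal \<zeta> * \<theta> n))) \<longlonglongrightarrow> r"
  shows "(\<lambda>n. prob_zero n (\<mu> n) (\<theta> n)) \<longlonglongrightarrow> Phi_ext r"
proof -
  from \<zeta> consider "\<zeta> = 1" | "\<zeta> = -1"
    by (cases \<zeta>) (auto simp: one_ereal_def abs_if split: if_splits)
  then show ?thesis
  proof cases
    case 1
    with r have A: "(\<lambda>n. ereal (sqrt (real n) * (\<mu> n - \<theta> n))) \<longlonglongrightarrow> r" by simp
    from 1 have B: "(\<lambda>n. ereal (sqrt (real n) * (- \<mu> n - \<theta> n))) \<longlonglongrightarrow> \<infinity> * (-1 - 1)"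
      using endpoints_large_tuning(2)[OF pos s q] by (simp add: one_ereal_def)
    have "Phi_ext (\<infinity> * (-1 - 1)) = 0" by (simp add: one_ereal_def Phi_ext_def)
    with prob_zero_tendsto[OF pos A B] show ?thesis by simp
  next
    case 2
    with r have "(\<lambda>n. - ereal (sqrt (real n) * (\<mu> n + \<theta> n))) \<longlonglongrightarrow> - r"
      by (intro tendsto_uminus_ereal) simp
    then have B: "(\<lambda>n. ereal (sqrt (real n) * (- \<mu> n - \<theta> n))) \<longlonglongrightarrow> - r"
      by (simp add: algebra_simps)
    from 2 have A: "(\<lambda>n. ereal (sqrt (real n) * (\<mu> n - \<theta> n))) \<longlonglongrightarrow> \<infinity> * (1 - -1)"
      using endpoints_large_tuning(1)[OF pos s q] by (simp add: one_ereal_def)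
    have "Phi_ext (\<infinity> * (1 - -1)) = 1" by (simp add: one_ereal_def Phi_ext_def)
    with prob_zero_tendsto[OF pos A B] show ?thesis by (simp add: Phi_ext_uminus)
  qed
qed

theorem proposition1:
  fixes \<mu> \<theta> :: "nat \<Rightarrow> real" and m :: ereal
  assumes pos: "\<And>n. \<mu> n > 0"
    and mu0: "\<mu> \<longlonglongrightarrow> 0"
    and mlim: "(\<lambda>n. ereal (sqrt (real n) * \<mu> n)) \<longlonglongrightarrow> m"
    and m_nonneg: "0 \<le> m"
  shows
    "(m \<noteq> \<infinity> \<longrightarrow> (\<forall>\<nu>::ereal.
        (\<lambda>n. ereal (sqrt (real n) * \<theta> n)) \<longlonglongrightarrow> \<nu> \<longrightarrow>
        (\<lambda>n. prob_zero n (\<mu> n) (\<theta> n)) \<longlonglongrightarrow> Phi_ext (- \<nu> + m) - Phi_ext (- \<nu> - m)))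
     \<and>
     (m = \<infinity> \<longrightarrow> (\<forall>\<zeta>::ereal.
        (\<lambda>n. ereal (\<theta> n / \<mu> n)) \<longlonglongrightarrow> \<zeta> \<longrightarrow>
          (\<bar>\<zeta>\<bar> < 1 \<longrightarrow> (\<lambda>n. prob_zero n (\<mu> n) (\<theta> n)) \<longlonglongrightarrow> 1)
        \<and> (\<bar>\<zeta>\<bar> = 1 \<longrightarrow> (\<forall>r::ereal.
              (\<lambda>n. ereal (sqrt (real n) * (\<mu> n - real_of_ereal \<zeta> * \<theta> n))) \<longlonglongrightarrow> r \<longrightarrow>
              (\<lambda>n. prob_zero n (\<mu> n) (\<theta> n)) \<longlonglongrightarrow> Phi_ext r))
        \<and> (\<bar>\<zeta>\<bar> > 1 \<longrightarrow> (\<lambda>n. prob_zero n (\<mu> n) (\<theta> n)) \<longlonglongrightarrow> 0)))"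
proof (intro conjI impI allI)
  fix \<nu> :: ereal
  assume "m \<noteq> \<infinity>" and \<nu>: "(\<lambda>n. ereal (sqrt (real n) * \<theta> n)) \<longlonglongrightarrow> \<nu>"
  with m_nonneg obtain m' where "m = ereal m'" by (cases m) auto
  with prob_zero_finite_tuning[OF pos _ \<nu>] mlim
  show "(\<lambda>n. prob_zero n (\<mu> n) (\<theta> n)) \<longlonglongrightarrow> Phi_ext (- \<nu> + m) - Phi_ext (- \<nu> - m)" by simp
next
  fix \<zeta> :: ereal
  assume "m = \<infinity>" and q: "(\<lambda>n. ereal (\<theta> n / \<mu> n)) \<longlonglongrightarrow> \<zeta>"
  with mlim have s: "(\<lambda>n. ereal (sqrt (real n) * \<mu> n)) \<longlonglongrightarrow> \<infinity>" by simp
  show "\<bar>\<zeta>\<bar> < 1 \<Longrightarrow> (\<lambda>n. prob_zero n (\<mu> n) (\<theta> n)) \<longlonglongrightarrow> 1"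
    by (rule prob_zero_large_tuning_inside[OF pos s q])
  show "\<bar>\<zeta>\<bar> > 1 \<Longrightarrow> (\<lambda>n. prob_zero n (\<mu> n) (\<theta> n)) \<longlonglongrightarrow> 0"
    by (rule prob_zero_large_tuning_outside[OF pos s q])
  show "\<bar>\<zeta>\<bar> = 1 \<Longrightarrow> (\<lambda>n. ereal (sqrt (real n) * (\<mu> n - real_of_ereal \<zeta> * \<theta> n))) \<longlonglongrightarrow> r
      \<Longrightarrow> (\<lambda>n. prob_zero n (\<mu> n) (\<theta> n)) \<longlonglongrightarrow> Phi_ext r" for r
    by (rule prob_zero_large_tuning_boundary[OF pos s q])
qed

end
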